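(* On the open set $\Omega\subset\mathbb{R}^3$ where $u,v,w$ are pairwise distinct, consider the system $$u'=\frac{1}{u-v}+\frac{1}{u-w},\quad v'=\frac{1}{v-w}+\frac{1}{v-u},\quad w'=\frac{1}{w-u}+\frac{1}{w-v},$$ written $\mathbf{u}'=\mathbf{U}(\mathbf{u})$ with $\mathbf{u}=(u,v,w)$. Define $$P_{f1}(\mathbf{u})=\frac{-1}{\sqrt6\,(u-v)(v-w)(w-u)}\begin{pmatrix}0&1&-1\\-1&0&1\\1&-1&0\end{pmatrix},\qquad H_f(\mathbf{u})=\frac{1}{6\sqrt6}(u+v-2w)\big[(u+v-2w)^2-9(u-v)^2\big],$$ $$P_{f2}(\mathbf{u})=\frac16\Big[\frac{u-v}{(v-w)(w-u)}+\frac{2}{u-v}\Big]\begin{pmatrix}0&2&1\\-2&0&-1\\-1&1&0\end{pmatrix}+\frac12\Big[\frac1{v-w}-\frac1{w-u}\Big]\begin{pmatrix}0&0&1\\0&0&1\\-1&-1&0\end{pmatrix},$$ and $H^{(1)}(\mathbf{u})=u+v+w$. Then $P_{f1}$ and $P_{f2}$ are compatible Poisson matrices on $\Omega$, and the system is bi-Hamiltonian: $$\mathbf{u}'=P_{f1}(\mathbf{u})\nabla H_f(\mathbf{u})=P_{f2}(\mathbf{u})\nabla H^{(1)}(\mathbf{u}).$$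
   Context: A smooth skew-symmetric matrix-valued function $P$ on an open subset of $\mathbb{R}^3$ is a Poisson matrix if the bracket $\{f,g\}=(\nabla f)^{T}P\,\nabla g$ satisfies the Jacobi identity; two Poisson matrices are compatible if every linear combination of them is again a Poisson matrix. *)

theory Defs
  imports "HOL-Analysis.Analysis"
begin

type_synonym pt = "real ^ 3"
type_synonym mat3 = "real ^ 3 ^ 3"

definition partial :: "3 \<Rightarrow> (pt \<Rightarrow> real) \<Rightarrow> pt \<Rightarrow> real" where
  "partial i f x = deriv (\<lambda>t. f (x + t *\<^sub>R axis i 1)) 0"

definition grad :: "(pt \<Rightarrow> real) \<Rightarrow> pt \<Rightarrow> pt" where
  "grad f x = (\<chi> i. partial i f x)"

fun iterpartial :: "3 list \<Rightarrow> (pt \<Rightarrow> real) \<Rightarrow> pt \<Rightarrow> real" where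
  "iterpartial [] f = f"
| "iterpartial (i # is) f = partial i (iterpartial is f)"

definition smooth_on :: "pt set \<Rightarrow> (pt \<Rightarrow> real) \<Rightarrow> bool" where
  "smooth_on S f \<longleftrightarrow> (\<forall>is. iterpartial is f differentiable_on S \<and> continuous_on S (iterpartial is f))"

definition pbracket :: "(pt \<Rightarrow> mat3) \<Rightarrow> (pt \<Rightarrow> real) \<Rightarrow> (pt \<Rightarrow> real) \<Rightarrow> pt \<Rightarrow> real" where
  "pbracket P f g x = grad f x \<bullet> (P x *v grad g x)"

definition poisson_matrix_on :: "pt set \<Rightarrow> (pt \<Rightarrow> mat3) \<Rightarrow> bool" where
  "poisson_matrix_on S P \<longleftrightarrow>
     (\<forall>i j. smooth_on S (\<lambda>x. P x $ i $ j)) \<and>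
     (\<forall>x\<in>S. transpose (P x) = - P x) \<and>
     (\<forall>f g h. smooth_on S f \<and> smooth_on S g \<and> smooth_on S h \<longrightarrow>
        (\<forall>x\<in>S. pbracket P f (pbracket P g h) x + pbracket P g (pbracket P h f) x
                 + pbracket P h (pbracket P f g) x = 0))"

definition compatible_on :: "pt set \<Rightarrow> (pt \<Rightarrow> mat3) \<Rightarrow> (pt \<Rightarrow> mat3) \<Rightarrow> bool" where
  "compatible_on S P Q \<longleftrightarrow> (\<forall>a b::real. poisson_matrix_on S (\<lambda>x. a *\<^sub>R P x + b *\<^sub>R Q x))"

definition Omega :: "pt set" where
  "Omega = {x. x$1 \<noteq> x$2 \<and> x$2 \<noteq> x$3 \<and> x$3 \<noteq> x$1}"

definition Ufield :: "pt \<Rightarrow> pt" where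
  "Ufield x = (let u = x$1; v = x$2; w = x$3 in
     vector [1/(u-v) + 1/(u-w), 1/(v-w) + 1/(v-u), 1/(w-u) + 1/(w-v)])"

definition Pf1 :: "pt \<Rightarrow> mat3" where
  "Pf1 x = (let u = x$1; v = x$2; w = x$3 in
     (-1 / (sqrt 6 * (u-v) * (v-w) * (w-u))) *\<^sub>R
       vector [vector [0,1,-1], vector [-1,0,1], vector [1,-1,0]])"

definition Hf :: "pt \<Rightarrow> real" where
  "Hf x = (let u = x$1; v = x$2; w = x$3 in
     1 / (6 * sqrt 6) * (u + v - 2*w) * ((u + v - 2*w)^2 - 9*(u-v)^2))"

definition Pf2 :: "pt \<Rightarrow> mat3" where
  "Pf2 x = (let u = x$1; v = x$2; w = x$3 in
     (1/6 * ((u-v)/((v-w)*(w-u)) + 2/(u-v))) *\<^sub>R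
       vector [vector [0,2,1], vector [-2,0,-1], vector [-1,1,0]]
   + (1/2 * (1/(v-w) - 1/(w-u))) *\<^sub>R
       vector [vector [0,0,1], vector [0,0,1], vector [-1,-1,0]])"

definition H1 :: "pt \<Rightarrow> real" where
  "H1 x = x$1 + x$2 + x$3"

end

theory Submission
  imports Defs
begin

(*
  A skew 3x3 matrix field P, written as P23 = p1, P31 = p2, P12 = p3, is Poisson iff
  p . curl p = 0: in the jacobiator of smooth f, g, h the second derivatives of f, g, h cancel
  by skew-symmetry of P and symmetry of the Hessians, leaving -det(grad f, grad g, grad h)
  times p . curl p.  For the pencil a Pf1 + b Pf2 all coefficients are rational functions of
  the differences u - v, v - w, w - u, which makes them smooth on Omega and annihilated by
  d/du + d/dv + d/dw; the latter kills the a^2 and b^2 terms of p . curl p, and the remaining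
  ab term vanishes by direct computation.  The two bi-Hamiltonian identities are direct
  computations as well.
*)

section \<open>Partial derivatives\<close>

lemma has_real_derivative_along_line:
  fixes f :: "'a::real_normed_vector \<Rightarrow> real"
  assumes "(f has_derivative D) (at (y + s0 *\<^sub>R e))"
  shows "((\<lambda>s. f (y + s *\<^sub>R e)) has_real_derivative D e) (at s0)"
proof -
  have line: "((\<lambda>s. y + s *\<^sub>R e) has_derivative (\<lambda>s. s *\<^sub>R e)) (at s0)"
    by (auto intro!: derivative_eq_intros)
  have "((\<lambda>s. f (y + s *\<^sub>R e)) has_derivative (\<lambda>s. D (s *\<^sub>R e))) (at s0)"
    using has_derivative_compose[OF line assms] by simp
  moreover have "(\<lambda>s. D (s *\<^sub>R e)) = (*) (D e)"
    using linear_cmul[OF has_derivative_linear[OF assms]] by (auto simp: mult.commute)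
  ultimately show ?thesis
    unfolding has_field_derivative_def by simp
qed

lemma partial_eq_derivative:
  assumes "(f has_derivative D) (at x)"
  shows "partial i f x = D (axis i 1)"
  unfolding partial_def
  by (rule DERIV_imp_deriv) (use has_real_derivative_along_line[of f D x 0] assms in simp)

lemma has_real_derivative_partial:
  assumes "f differentiable (at (y + s0 *\<^sub>R axis i 1))"
  shows "((\<lambda>s. f (y + s *\<^sub>R axis i 1)) has_real_derivative partial i f (y + s0 *\<^sub>R axis i 1)) (at s0)"
proof -
  obtain D where "(f has_derivative D) (at (y + s0 *\<^sub>R axis i 1))"
    using assms differentiable_def by blast
  then show ?thesis
    using has_real_derivative_along_line partial_eq_derivative by metis
qed

lemma partial_cong_open:
  assumes "open S" "x \<in> S" "\<And>y. y \<in> S \<Longrightarrow> f y = g y" "g differentiable (at x)"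
  shows "partial k f x = partial k g x"
proof -
  obtain D where D: "(g has_derivative D) (at x)"
    using assms(4) differentiable_def by blast
  have "(f has_derivative D) (at x)"
    by (rule has_derivative_transform_within_open[OF D assms(1,2)]) (use assms(3) in auto)
  then show ?thesis
    using partial_eq_derivative D by metis
qed

lemma partial_const: "partial k (\<lambda>x. c) x = 0"
  using partial_eq_derivative[OF has_derivative_const] by simp

lemma has_derivative_component: "((\<lambda>x::pt. x $ i) has_derivative (\<lambda>v. v $ i)) F"
  by (rule bounded_linear_imp_has_derivative[OF bounded_linear_vec_nth])

lemma partial_component: "partial k (\<lambda>x. x $ i) x = axis k 1 $ i"
  using partial_eq_derivative[OF has_derivative_component] by simp

lemma partial_uminus:
  assumes "f differentiable (at x)"
  shows "partial k (\<lambda>y. - f y) x = - partial k f x"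
proof -
  obtain D where D: "(f has_derivative D) (at x)"
    using assms unfolding differentiable_def by blast
  show ?thesis
    using partial_eq_derivative[OF has_derivative_minus[OF D]] partial_eq_derivative[OF D]
    by simp
qed

lemma partial_add:
  assumes "f differentiable (at x)" "g differentiable (at x)"
  shows "partial k (\<lambda>y. f y + g y) x = partial k f x + partial k g x"
proof -
  obtain D E where D: "(f has_derivative D) (at x)" and E: "(g has_derivative E) (at x)"
    using assms unfolding differentiable_def by blast
  show ?thesis
    using partial_eq_derivative[OF has_derivative_add[OF D E]]
      partial_eq_derivative[OF D] partial_eq_derivative[OF E]
    by simp
qed

lemma partial_mult:
  assumes "f differentiable (at x)" "g differentiable (at x)"
  shows "partial k (\<lambda>y. f y * g y) x = partial k f x * g x + f x * partial k g x"
proof -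
  obtain D E where D: "(f has_derivative D) (at x)" and E: "(g has_derivative E) (at x)"
    using assms unfolding differentiable_def by blast
  show ?thesis
    using partial_eq_derivative[OF has_derivative_mult[OF D E]]
      partial_eq_derivative[OF D] partial_eq_derivative[OF E]
    by (simp add: algebra_simps)
qed

lemma partial_linear_combination:
  assumes "f differentiable (at x)" "g differentiable (at x)" "h differentiable (at x)"
  shows "partial k (\<lambda>y. a * f y + b * g y + c * h y) x
    = a * partial k f x + b * partial k g x + c * partial k h x"
proof -
  obtain D E F where D: "(f has_derivative D) (at x)" and E: "(g has_derivative E) (at x)"
    and F: "(h has_derivative F) (at x)"
    using assms unfolding differentiable_def by blast
  have "((\<lambda>y. a * f y + b * g y + c * h y) has_derivative (\<lambda>v. a * D v + b * E v + c * F v)) (at x)"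
    using D E F by (intro has_derivative_add has_derivative_mult_right)
  then show ?thesis
    using partial_eq_derivative[OF D] partial_eq_derivative[OF E] partial_eq_derivative[OF F]
    by (simp add: partial_eq_derivative)
qed

section \<open>Symmetry of mixed partial derivatives\<close>

lemma second_difference_mean_value:
  fixes f :: "pt \<Rightarrow> real"
  assumes h: "0 < h"
    and df: "\<And>s t. 0 \<le> s \<Longrightarrow> s \<le> h \<Longrightarrow> 0 \<le> t \<Longrightarrow> t \<le> h \<Longrightarrow>
      f differentiable (at (x + s *\<^sub>R axis i 1 + t *\<^sub>R axis j 1))"
    and dfi: "\<And>s t. 0 \<le> s \<Longrightarrow> s \<le> h \<Longrightarrow> 0 \<le> t \<Longrightarrow> t \<le> h \<Longrightarrow>
      partial i f differentiable (at (x + s *\<^sub>R axis i 1 + t *\<^sub>R axis j 1))"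
  obtains \<xi> \<eta> where "0 < \<xi>" "\<xi> < h" "0 < \<eta>" "\<eta> < h"
    "f (x + h *\<^sub>R axis i 1 + h *\<^sub>R axis j 1) - f (x + h *\<^sub>R axis i 1) - f (x + h *\<^sub>R axis j 1) + f x
     = h * h * partial j (partial i f) (x + \<xi> *\<^sub>R axis i 1 + \<eta> *\<^sub>R axis j 1)"
proof -
  define e where "e = axis i (1::real)"
  define d where "d = axis j (1::real)"
  define g where "g s = f ((x + h *\<^sub>R d) + s *\<^sub>R e) - f (x + s *\<^sub>R e)" for s
  define g' where "g' s = partial i f ((x + h *\<^sub>R d) + s *\<^sub>R e) - partial i f (x + s *\<^sub>R e)" for s
  have "DERIV g s :> g' s" if "0 \<le> s" "s \<le> h" for s
  proof -
    have "f differentiable (at ((x + h *\<^sub>R d) + s *\<^sub>R e))" "f differentiable (at (x + s *\<^sub>R e))"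
      using df[of s h] df[of s 0] that h by (simp_all add: e_def d_def algebra_simps)
    then show ?thesis
      unfolding g_def g'_def e_def by (intro DERIV_diff has_real_derivative_partial) auto
  qed
  then obtain \<xi> where \<xi>: "0 < \<xi>" "\<xi> < h" "g h - g 0 = h * g' \<xi>"
    using MVT2[of 0 h g g'] h by auto
  define k where "k t = partial i f ((x + \<xi> *\<^sub>R e) + t *\<^sub>R d)" for t
  have "DERIV k t :> partial j (partial i f) ((x + \<xi> *\<^sub>R e) + t *\<^sub>R d)" if "0 \<le> t" "t \<le> h" for t
    unfolding k_def d_def
    by (rule has_real_derivative_partial) (use dfi[of \<xi> t] that \<xi> in \<open>auto simp: e_def\<close>)
  then obtain \<eta> where \<eta>: "0 < \<eta>" "\<eta> < h"
    "k h - k 0 = h * partial j (partial i f) ((x + \<xi> *\<^sub>R e) + \<eta> *\<^sub>R d)"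
    using MVT2[of 0 h k "\<lambda>t. partial j (partial i f) ((x + \<xi> *\<^sub>R e) + t *\<^sub>R d)"] h by auto
  have "g' \<xi> = k h - k 0"
    unfolding g'_def k_def by (simp add: algebra_simps)
  moreover have "g h - g 0 = f (x + h *\<^sub>R e + h *\<^sub>R d) - f (x + h *\<^sub>R e) - f (x + h *\<^sub>R d) + f x"
    unfolding g_def by (simp add: algebra_simps)
  ultimately show ?thesis
    using that \<xi> \<eta> unfolding e_def d_def by auto
qed

lemma partial_partial_commute:
  fixes f :: "pt \<Rightarrow> real"
  assumes S: "open S" "x \<in> S"
    and f: "f differentiable_on S"
    and fi: "partial i f differentiable_on S" and fj: "partial j f differentiable_on S"
    and ci: "continuous_on S (partial j (partial i f))"
    and cj: "continuous_on S (partial i (partial j f))"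
  shows "partial j (partial i f) x = partial i (partial j f) x"
proof (rule ccontr)
  let ?A = "partial j (partial i f)" and ?B = "partial i (partial j f)"
  assume "?A x \<noteq> ?B x"
  define \<epsilon> where "\<epsilon> = \<bar>?A x - ?B x\<bar> / 2"
  have "\<epsilon> > 0"
    using \<open>?A x \<noteq> ?B x\<close> by (simp add: \<epsilon>_def)
  moreover have "isCont ?A x" "isCont ?B x"
    using ci cj S continuous_on_eq_continuous_at by blast+
  ultimately obtain \<delta>A \<delta>B where
    \<delta>A: "\<delta>A > 0" "\<And>y. dist y x < \<delta>A \<Longrightarrow> dist (?A y) (?A x) < \<epsilon>" and
    \<delta>B: "\<delta>B > 0" "\<And>y. dist y x < \<delta>B \<Longrightarrow> dist (?B y) (?B x) < \<epsilon>"
    unfolding continuous_at_eps_delta by metis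
  obtain r where r: "r > 0" "ball x r \<subseteq> S"
    using S open_contains_ball by blast
  define h where "h = min r (min \<delta>A \<delta>B) / 3"
  have h: "h > 0" "2 * h < r" "2 * h < \<delta>A" "2 * h < \<delta>B"
    using r \<delta>A \<delta>B by (auto simp: h_def)
  have near: "dist (x + s *\<^sub>R axis a 1 + t *\<^sub>R axis b 1) x \<le> 2 * h"
    if "0 \<le> s" "s \<le> h" "0 \<le> t" "t \<le> h" for s t a b
    using norm_triangle_ineq[of "s *\<^sub>R axis a (1::real)" "t *\<^sub>R axis b (1::real)"] that
    by (simp add: dist_norm)
  have at: "F differentiable (at (x + s *\<^sub>R axis a 1 + t *\<^sub>R axis b 1))"
    if "F differentiable_on S" "0 \<le> s" "s \<le> h" "0 \<le> t" "t \<le> h" for F s t a b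
    using that(1) near[OF that(2-), of a b] h r S
      differentiable_on_eq_differentiable_at[OF \<open>open S\<close>] by (force simp: dist_commute)
  obtain \<xi> \<eta> where \<xi>\<eta>: "0 < \<xi>" "\<xi> < h" "0 < \<eta>" "\<eta> < h"
    "f (x + h *\<^sub>R axis i 1 + h *\<^sub>R axis j 1) - f (x + h *\<^sub>R axis i 1) - f (x + h *\<^sub>R axis j 1) + f x
     = h * h * ?A (x + \<xi> *\<^sub>R axis i 1 + \<eta> *\<^sub>R axis j 1)"
    using second_difference_mean_value[of h f x i j] h at f fi by blast
  obtain \<xi>' \<eta>' where \<xi>\<eta>': "0 < \<xi>'" "\<xi>' < h" "0 < \<eta>'" "\<eta>' < h"
    "f (x + h *\<^sub>R axis j 1 + h *\<^sub>R axis i 1) - f (x + h *\<^sub>R axis j 1) - f (x + h *\<^sub>R axis i 1) + f x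
     = h * h * ?B (x + \<xi>' *\<^sub>R axis j 1 + \<eta>' *\<^sub>R axis i 1)"
    using second_difference_mean_value[of h f x j i] h at f fj by blast
  have "?A (x + \<xi> *\<^sub>R axis i 1 + \<eta> *\<^sub>R axis j 1) = ?B (x + \<xi>' *\<^sub>R axis j 1 + \<eta>' *\<^sub>R axis i 1)"
    using \<xi>\<eta>(5) \<xi>\<eta>'(5) h by (simp add: algebra_simps)
  moreover have "dist (?A (x + \<xi> *\<^sub>R axis i 1 + \<eta> *\<^sub>R axis j 1)) (?A x) < \<epsilon>"
    using \<delta>A(2) near[of \<xi> \<eta> i j] \<xi>\<eta> h by force
  moreover have "dist (?B (x + \<xi>' *\<^sub>R axis j 1 + \<eta>' *\<^sub>R axis i 1)) (?B x) < \<epsilon>"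
    using \<delta>B(2) near[of \<xi>' \<eta>' j i] \<xi>\<eta>' h by force
  ultimately show False
    unfolding \<epsilon>_def dist_real_def by (auto simp: abs_real_def split: if_splits)
qed

section \<open>Smooth functions\<close>

lemma iterpartial_snoc: "iterpartial (is @ [i]) f = iterpartial is (partial i f)"
  by (induction "is") simp_all

lemma smooth_on_partial: "smooth_on S f \<Longrightarrow> smooth_on S (partial i f)"
  unfolding smooth_on_def by (metis iterpartial_snoc)

lemma smooth_on_differentiable_on: "smooth_on S f \<Longrightarrow> f differentiable_on S"
  unfolding smooth_on_def by (metis iterpartial.simps(1))

lemma smooth_on_continuous_on: "smooth_on S f \<Longrightarrow> continuous_on S f"
  unfolding smooth_on_def by (metis iterpartial.simps(1))

lemma smooth_on_differentiable_at:
  "smooth_on S f \<Longrightarrow> open S \<Longrightarrow> x \<in> S \<Longrightarrow> f differentiable (at x)"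
  using smooth_on_differentiable_on differentiable_on_eq_differentiable_at by blast

lemma smooth_on_partial_commute:
  assumes "smooth_on S f" "open S" "x \<in> S"
  shows "partial j (partial i f) x = partial i (partial j f) x"
  using assms
  by (intro partial_partial_commute smooth_on_differentiable_on smooth_on_continuous_on
      smooth_on_partial)

section \<open>The Jacobi identity for \<open>3 \<times> 3\<close> matrices\<close>

definition pairing :: "(3 \<Rightarrow> real) \<Rightarrow> (3 \<Rightarrow> 3 \<Rightarrow> real) \<Rightarrow> (3 \<Rightarrow> real) \<Rightarrow> real" where
  "pairing F P G = (\<Sum>i\<in>UNIV. F i * (\<Sum>j\<in>UNIV. P i j * G j))"

text \<open>The \<open>k\<close>-th partial derivative of \<open>pairing (\<nabla>g) P (\<nabla>h)\<close>, given the gradients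
  \<open>G, H\<close>, the Hessians \<open>G2, H2\<close> and the derivatives \<open>dP k i j = \<partial>\<^sub>k P\<^sub>i\<^sub>j\<close>.\<close>
definition pairing_deriv ::
    "(3 \<Rightarrow> real) \<Rightarrow> (3 \<Rightarrow> 3 \<Rightarrow> real) \<Rightarrow> (3 \<Rightarrow> real) \<Rightarrow> (3 \<Rightarrow> 3 \<Rightarrow> real) \<Rightarrow>
     (3 \<Rightarrow> 3 \<Rightarrow> real) \<Rightarrow> (3 \<Rightarrow> 3 \<Rightarrow> 3 \<Rightarrow> real) \<Rightarrow> 3 \<Rightarrow> real" where
  "pairing_deriv G G2 H H2 P dP k =
     (\<Sum>i\<in>UNIV. \<Sum>j\<in>UNIV. G2 k i * P i j * H j + G i * dP k i j * H j + G i * P i j * H2 k j)"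

text \<open>Writing a skew matrix as \<open>P\<^sub>2\<^sub>3 = p\<^sub>1, P\<^sub>3\<^sub>1 = p\<^sub>2, P\<^sub>1\<^sub>2 = p\<^sub>3\<close>, this is \<open>p \<bullet> curl p\<close>.\<close>
definition jacobi_coeff :: "(3 \<Rightarrow> 3 \<Rightarrow> real) \<Rightarrow> (3 \<Rightarrow> 3 \<Rightarrow> 3 \<Rightarrow> real) \<Rightarrow> real" where
  "jacobi_coeff P dP = P 2 3 * (dP 2 1 2 + dP 3 1 3) - P 1 3 * (dP 3 2 3 - dP 1 1 2)
     - P 1 2 * (dP 1 1 3 + dP 2 2 3)"

definition jacobi_coeff_at :: "(pt \<Rightarrow> mat3) \<Rightarrow> pt \<Rightarrow> real" where
  "jacobi_coeff_at P x = jacobi_coeff (\<lambda>i j. P x $ i $ j) (\<lambda>k i j. partial k (\<lambda>y. P y $ i $ j) x)"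

lemma jacobiator_pairing:
  assumes "\<And>i j. P j i = - P i j" "\<And>k i j. dP k j i = - dP k i j"
    and "\<And>i j. F2 j i = F2 i j" "\<And>i j. G2 j i = G2 i j" "\<And>i j. H2 j i = H2 i j"
  shows "pairing F P (pairing_deriv G G2 H H2 P dP) + pairing G P (pairing_deriv H H2 F F2 P dP)
      + pairing H P (pairing_deriv F F2 G G2 P dP)
    = - (F 1 * (G 2 * H 3 - G 3 * H 2) - F 2 * (G 1 * H 3 - G 3 * H 1)
         + F 3 * (G 1 * H 2 - G 2 * H 1)) * jacobi_coeff P dP"
proof -
  have "P i i = 0" "dP k i i = 0" for i k
    using assms(1)[of i i] assms(2)[of k i i] by auto
  note entries = this assms(1)[of 1 2] assms(1)[of 1 3] assms(1)[of 2 3]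
    assms(2)[of _ 1 2] assms(2)[of _ 1 3] assms(2)[of _ 2 3]
    assms(3)[of 1 2] assms(3)[of 1 3] assms(3)[of 2 3] assms(4)[of 1 2] assms(4)[of 1 3]
    assms(4)[of 2 3] assms(5)[of 1 2] assms(5)[of 1 3] assms(5)[of 2 3]
  show ?thesis
    unfolding pairing_def pairing_deriv_def jacobi_coeff_def sum_3 entries
    by (simp add: algebra_simps)
qed

lemma pbracket_eq_pairing:
  "pbracket P f g x = pairing (\<lambda>i. partial i f x) (\<lambda>i j. P x $ i $ j) (\<lambda>j. partial j g x)"
  by (simp add: pbracket_def grad_def inner_vec_def matrix_vector_mult_def pairing_def)

lemma partial_pbracket:
  assumes "\<And>i. partial i g differentiable (at x)" "\<And>i. partial i h differentiable (at x)"
    and "\<And>i j. (\<lambda>y. P y $ i $ j) differentiable (at x)"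
  shows "partial k (pbracket P g h) x =
    pairing_deriv (\<lambda>i. partial i g x) (\<lambda>k i. partial k (partial i g) x)
      (\<lambda>j. partial j h x) (\<lambda>k j. partial k (partial j h) x)
      (\<lambda>i j. P x $ i $ j) (\<lambda>k i j. partial k (\<lambda>y. P y $ i $ j) x) k"
proof -
  define Dg where "Dg i = frechet_derivative (partial i g) (at x)" for i
  define Dh where "Dh j = frechet_derivative (partial j h) (at x)" for j
  define DP where "DP i j = frechet_derivative (\<lambda>y. P y $ i $ j) (at x)" for i j
  have Dg: "(partial i g has_derivative Dg i) (at x)"
    and Dh: "(partial j h has_derivative Dh j) (at x)"
    and DP: "((\<lambda>y. P y $ i $ j) has_derivative DP i j) (at x)" for i j
    unfolding Dg_def Dh_def DP_def using assms frechet_derivative_works by blast+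
  have "(pbracket P g h has_derivative
      (\<lambda>v. \<Sum>i\<in>UNIV. \<Sum>j\<in>UNIV. partial i g x * (P x $ i $ j * Dh j v + DP i j v * partial j h x)
        + Dg i v * (P x $ i $ j * partial j h x))) (at x)"
    unfolding pbracket_eq_pairing pairing_def sum_distrib_left
    by (intro has_derivative_sum has_derivative_mult Dg Dh DP)
  then show ?thesis
    unfolding pairing_deriv_def partial_eq_derivative[OF Dg] partial_eq_derivative[OF Dh]
      partial_eq_derivative[OF DP]
    by (simp add: partial_eq_derivative algebra_simps)
qed

lemma poisson_matrix_onI:
  assumes S: "open S" and smooth: "\<And>i j. smooth_on S (\<lambda>x. P x $ i $ j)"
    and skew: "\<And>x. x \<in> S \<Longrightarrow> transpose (P x) = - P x"
    and jacobi: "\<And>x. x \<in> S \<Longrightarrow> jacobi_coeff_at P x = 0"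
  shows "poisson_matrix_on S P"
  unfolding poisson_matrix_on_def
proof (intro conjI allI impI ballI smooth skew)
  fix f g h x
  assume "smooth_on S f \<and> smooth_on S g \<and> smooth_on S h" and x: "x \<in> S"
  then have f: "smooth_on S f" and g: "smooth_on S g" and h: "smooth_on S h"
    by auto
  have skew_entry: "P y $ j $ i = - P y $ i $ j" if "y \<in> S" for y i j
    using arg_cong[OF skew[OF that], of "\<lambda>M. M $ i $ j"] by (simp add: transpose_def)
  have dP: "(\<lambda>y. P y $ i $ j) differentiable (at x)" for i j
    using smooth_on_differentiable_at[OF smooth S x] .
  have skew_deriv: "partial k (\<lambda>y. P y $ j $ i) x = - partial k (\<lambda>y. P y $ i $ j) x" for k i j
  proof -
    have "partial k (\<lambda>y. P y $ j $ i) x = partial k (\<lambda>y. - P y $ i $ j) x"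
      by (rule partial_cong_open[OF S x skew_entry differentiable_minus[OF dP]])
    then show ?thesis
      using partial_uminus[OF dP] by simp
  qed
  have hessian_sym: "partial i (partial j F) x = partial j (partial i F) x" if "smooth_on S F" for F i j
    using smooth_on_partial_commute[OF that S x] by simp
  have partial_bracket: "partial k (pbracket P G H) x =
      pairing_deriv (\<lambda>i. partial i G x) (\<lambda>k i. partial k (partial i G) x)
        (\<lambda>j. partial j H x) (\<lambda>k j. partial k (partial j H) x)
        (\<lambda>i j. P x $ i $ j) (\<lambda>k i j. partial k (\<lambda>y. P y $ i $ j) x) k"
    if "smooth_on S G" "smooth_on S H" for G H k
    by (intro partial_pbracket dP smooth_on_differentiable_at[OF _ S x] smooth_on_partial that)
  have "pbracket P f (pbracket P g h) x + pbracket P g (pbracket P h f) x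
      + pbracket P h (pbracket P f g) x
    = - (partial 1 f x * (partial 2 g x * partial 3 h x - partial 3 g x * partial 2 h x)
         - partial 2 f x * (partial 1 g x * partial 3 h x - partial 3 g x * partial 1 h x)
         + partial 3 f x * (partial 1 g x * partial 2 h x - partial 2 g x * partial 1 h x))
       * jacobi_coeff_at P x"
    unfolding pbracket_eq_pairing[of P _ "pbracket P _ _"] partial_bracket[OF g h]
      partial_bracket[OF h f] partial_bracket[OF f g] jacobi_coeff_at_def
    by (intro jacobiator_pairing skew_entry[OF x] skew_deriv hessian_sym f g h)
  then show "pbracket P f (pbracket P g h) x + pbracket P g (pbracket P h f) x
      + pbracket P h (pbracket P f g) x = 0"
    using jacobi[OF x] by simp
qed

section \<open>The domain and rational functions of the coordinate differences\<close>

lemma open_Omega: "open Omega"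
proof -
  have Omega_eq: "Omega = {x. x $ 1 \<noteq> x $ 2} \<inter> {x. x $ 2 \<noteq> x $ 3} \<inter> {x. x $ 3 \<noteq> x $ 1}"
    unfolding Omega_def by auto
  have "open {x::pt. x $ a \<noteq> x $ b}" for a b
    by (rule open_Collect_neq) (auto intro: continuous_intros)
  then show ?thesis
    unfolding Omega_eq by (intro open_Int)
qed

lemma Omega_component_neq: "x \<in> Omega \<Longrightarrow> i \<noteq> j \<Longrightarrow> x $ i \<noteq> x $ j"
  unfolding Omega_def using exhaust_3[of i] exhaust_3[of j] by (elim disjE) auto

lemma Omega_differences_nonzero:
  "x \<in> Omega \<Longrightarrow> x $ 1 - x $ 2 \<noteq> 0 \<and> x $ 2 - x $ 3 \<noteq> 0 \<and> x $ 3 - x $ 1 \<noteq> 0"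
  unfolding Omega_def by auto

lemma Omega_differencesE:
  assumes "x \<in> Omega"
  obtains a b c where "x$1 - x$2 = a" "x$2 - x$3 = b" "x$3 - x$1 = c" "c = - a - b"
    "a \<noteq> 0" "b \<noteq> 0" "c \<noteq> 0"
  using Omega_differences_nonzero[OF assms] by (intro that[of "x$1 - x$2" "x$2 - x$3" "x$3 - x$1"]) auto

inductive_set diff_rational :: "(pt \<Rightarrow> real) set" where
  const: "(\<lambda>x. c) \<in> diff_rational"
| component: "(\<lambda>x. x $ i) \<in> diff_rational"
| inverse_diff: "i \<noteq> j \<Longrightarrow> (\<lambda>x. inverse (x $ i - x $ j)) \<in> diff_rational"
| add: "f \<in> diff_rational \<Longrightarrow> g \<in> diff_rational \<Longrightarrow> (\<lambda>x. f x + g x) \<in> diff_rational"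
| mult: "f \<in> diff_rational \<Longrightarrow> g \<in> diff_rational \<Longrightarrow> (\<lambda>x. f x * g x) \<in> diff_rational"

lemma diff_rational_diff:
  assumes "f \<in> diff_rational" "g \<in> diff_rational"
  shows "(\<lambda>x. f x - g x) \<in> diff_rational"
  using diff_rational.add[OF assms(1) diff_rational.mult[OF diff_rational.const assms(2)], of "-1"]
  by simp

lemma diff_rational_differentiable:
  "f \<in> diff_rational \<Longrightarrow> x \<in> Omega \<Longrightarrow> f differentiable (at x)"
proof (induction rule: diff_rational.induct)
  case (component i)
  then show ?case
    using has_derivative_component differentiable_def by blast
next
  case (inverse_diff i j)
  then have "x $ i - x $ j \<noteq> 0"
    using Omega_component_neq by auto
  moreover have "(\<lambda>x::pt. x $ a) differentiable (at x)" for a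
    using has_derivative_component differentiable_def by blast
  ultimately show ?case
    by (intro differentiable_inverse differentiable_diff)
qed auto

lemma partial_inverse_diff:
  assumes "x $ i \<noteq> x $ j"
  shows "partial k (\<lambda>x. inverse (x $ i - x $ j)) x
    = (axis k 1 $ j - axis k 1 $ i) * (inverse (x $ i - x $ j) * inverse (x $ i - x $ j))"
proof -
  have "((\<lambda>y. y $ i - y $ j) has_derivative (\<lambda>v. v $ i - v $ j)) (at x)"
    by (intro has_derivative_diff has_derivative_component)
  from Deriv.has_derivative_inverse[OF _ this] assms
  show ?thesis
    by (simp add: partial_eq_derivative algebra_simps)
qed

lemma partial_diff_rational:
  "f \<in> diff_rational \<Longrightarrow> \<exists>g\<in>diff_rational. \<forall>x\<in>Omega. partial k f x = g x"
proof (induction rule: diff_rational.induct)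
  case const
  show ?case
    by (intro bexI[of _ "\<lambda>x. 0"] diff_rational.const) (simp add: partial_const)
next
  case (component i)
  show ?case
    by (intro bexI[of _ "\<lambda>x. axis k 1 $ i"] diff_rational.const) (simp add: partial_component)
next
  case (inverse_diff i j)
  let ?g = "\<lambda>x. (axis k 1 $ j - axis k 1 $ i) * (inverse (x $ i - x $ j) * inverse (x $ i - x $ j))"
  have "\<forall>x\<in>Omega. partial k (\<lambda>x. inverse (x $ i - x $ j)) x = ?g x"
    using partial_inverse_diff Omega_component_neq inverse_diff by blast
  moreover have "?g \<in> diff_rational"
    using inverse_diff by (intro diff_rational.mult diff_rational.const diff_rational.inverse_diff)
  ultimately show ?case
    by (rule bexI)
next
  case (add f g)
  then obtain f' g' where f': "f' \<in> diff_rational" "\<forall>x\<in>Omega. partial k f x = f' x"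
    and g': "g' \<in> diff_rational" "\<forall>x\<in>Omega. partial k g x = g' x"
    by blast
  have "\<forall>x\<in>Omega. partial k (\<lambda>x. f x + g x) x = f' x + g' x"
    using f' g' partial_add diff_rational_differentiable[OF add.hyps(1)]
      diff_rational_differentiable[OF add.hyps(2)] by simp
  moreover have "(\<lambda>x. f' x + g' x) \<in> diff_rational"
    using diff_rational.add[OF f'(1) g'(1)] .
  ultimately show ?case
    by (rule bexI)
next
  case (mult f g)
  then obtain f' g' where f': "f' \<in> diff_rational" "\<forall>x\<in>Omega. partial k f x = f' x"
    and g': "g' \<in> diff_rational" "\<forall>x\<in>Omega. partial k g x = g' x"
    by blast
  have "\<forall>x\<in>Omega. partial k (\<lambda>x. f x * g x) x = f' x * g x + f x * g' x"
    using f' g' partial_mult diff_rational_differentiable[OF mult.hyps(1)]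
      diff_rational_differentiable[OF mult.hyps(2)] by simp
  moreover have "(\<lambda>x. f' x * g x + f x * g' x) \<in> diff_rational"
    using diff_rational.add[OF diff_rational.mult[OF f'(1) mult.hyps(2)]
        diff_rational.mult[OF mult.hyps(1) g'(1)]] .
  ultimately show ?case
    by (rule bexI)
qed

lemma iterpartial_diff_rational:
  "f \<in> diff_rational \<Longrightarrow> \<exists>g\<in>diff_rational. \<forall>x\<in>Omega. iterpartial is f x = g x"
proof (induction "is")
  case (Cons i "is")
  then obtain g where g: "g \<in> diff_rational" "\<forall>x\<in>Omega. iterpartial is f x = g x"
    by auto
  obtain g' where g': "g' \<in> diff_rational" "\<forall>x\<in>Omega. partial i g x = g' x"
    using partial_diff_rational[OF g(1)] by blast
  have "iterpartial (i # is) f x = g' x" if "x \<in> Omega" for x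
    using partial_cong_open[OF open_Omega that, of "iterpartial is f" g i] g g' that
      diff_rational_differentiable by simp
  with g'(1) show ?case
    by blast
qed auto

lemma smooth_on_diff_rational:
  assumes "f \<in> diff_rational"
  shows "smooth_on Omega f"
proof -
  have "iterpartial is f differentiable (at x)" if x: "x \<in> Omega" for "is" x
  proof -
    obtain g where g: "g \<in> diff_rational" "\<forall>y\<in>Omega. iterpartial is f y = g y"
      using iterpartial_diff_rational[OF assms] by blast
    obtain D where "(g has_derivative D) (at x)"
      using diff_rational_differentiable[OF g(1) x] differentiable_def by blast
    then have "(iterpartial is f has_derivative D) (at x)"
      by (rule has_derivative_transform_within_open[OF _ open_Omega x]) (use g in auto)
    then show ?thesis
      unfolding differentiable_def by blast
  qed
  then show ?thesis
    unfolding smooth_on_def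
    using differentiable_at_imp_differentiable_on differentiable_imp_continuous_on by blast
qed

section \<open>The pencil \<open>a P\<^sub>f\<^sub>1 + b P\<^sub>f\<^sub>2\<close>\<close>

definition of_differences :: "(real \<Rightarrow> real \<Rightarrow> real \<Rightarrow> real) \<Rightarrow> pt \<Rightarrow> real" where
  "of_differences F x = F (x $ 1 - x $ 2) (x $ 2 - x $ 3) (x $ 3 - x $ 1)"

lemma partial_of_differences:
  "partial k (of_differences F) x =
    (let e = axis k (1::real) in
     deriv (\<lambda>t. F (x $ 1 - x $ 2 + t * (e $ 1 - e $ 2)) (x $ 2 - x $ 3 + t * (e $ 2 - e $ 3))
       (x $ 3 - x $ 1 + t * (e $ 3 - e $ 1))) 0)"
proof -
  have "(x + t *\<^sub>R axis k 1) $ i - (x + t *\<^sub>R axis k 1) $ j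
      = x $ i - x $ j + t * (axis k 1 $ i - axis k 1 $ j)" for t i j
    by (simp add: algebra_simps)
  then show ?thesis
    unfolding partial_def of_differences_def Let_def by presburger
qed

lemma axis_components:
  "axis (1::3) (1::real) $ 1 = 1" "axis (1::3) (1::real) $ 2 = 0" "axis (1::3) (1::real) $ 3 = 0"
  "axis (2::3) (1::real) $ 1 = 0" "axis (2::3) (1::real) $ 2 = 1" "axis (2::3) (1::real) $ 3 = 0"
  "axis (3::3) (1::real) $ 1 = 0" "axis (3::3) (1::real) $ 2 = 0" "axis (3::3) (1::real) $ 3 = 1"
  by (simp_all add: axis_def)

definition coeff1 :: "real \<Rightarrow> real \<Rightarrow> real \<Rightarrow> real" where
  "coeff1 a b c = -1 / (sqrt 6 * a * b * c)"

definition coeff2 :: "real \<Rightarrow> real \<Rightarrow> real \<Rightarrow> real" where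
  "coeff2 a b c = 1/6 * (a / (b * c) + 2 / a)"

definition coeff3 :: "real \<Rightarrow> real \<Rightarrow> real \<Rightarrow> real" where
  "coeff3 a b c = 1/2 * (1 / b - 1 / c)"

definition M1 :: mat3 where "M1 = vector [vector [0,1,-1], vector [-1,0,1], vector [1,-1,0]]"
definition M2 :: mat3 where "M2 = vector [vector [0,2,1], vector [-2,0,-1], vector [-1,1,0]]"
definition M3 :: mat3 where "M3 = vector [vector [0,0,1], vector [0,0,1], vector [-1,-1,0]]"

lemma Pf1_eq: "Pf1 x = of_differences coeff1 x *\<^sub>R M1"
  unfolding Pf1_def of_differences_def coeff1_def M1_def Let_def by simp

lemma Pf2_eq: "Pf2 x = of_differences coeff2 x *\<^sub>R M2 + of_differences coeff3 x *\<^sub>R M3"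
  unfolding Pf2_def of_differences_def coeff2_def coeff3_def M2_def M3_def Let_def by simp

lemma pencil_entry:
  "(a *\<^sub>R Pf1 x + b *\<^sub>R Pf2 x) $ i $ j = a * M1 $ i $ j * of_differences coeff1 x
    + b * M2 $ i $ j * of_differences coeff2 x + b * M3 $ i $ j * of_differences coeff3 x"
  unfolding Pf1_eq Pf2_eq by (simp add: algebra_simps)

lemma transpose_pencil: "transpose (a *\<^sub>R Pf1 x + b *\<^sub>R Pf2 x) = - (a *\<^sub>R Pf1 x + b *\<^sub>R Pf2 x)"
  by (simp add: Pf1_eq Pf2_eq M1_def M2_def M3_def vec_eq_iff forall_3 transpose_def algebra_simps)

lemma coeff1_diff_rational: "of_differences coeff1 \<in> diff_rational"
proof -
  have "(\<lambda>x. (-1 / sqrt 6) * (inverse (x$1 - x$2) * (inverse (x$2 - x$3) * inverse (x$3 - x$1))))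
      \<in> diff_rational"
    by (rule diff_rational.mult[OF diff_rational.const diff_rational.mult[OF
          diff_rational.inverse_diff diff_rational.mult[OF diff_rational.inverse_diff
          diff_rational.inverse_diff]]]) simp_all
  moreover have "of_differences coeff1 = (\<lambda>x. (-1 / sqrt 6)
      * (inverse (x$1 - x$2) * (inverse (x$2 - x$3) * inverse (x$3 - x$1))))"
    by (auto simp: of_differences_def coeff1_def divide_inverse inverse_mult_distrib mult_ac)
  ultimately show ?thesis
    by simp
qed

lemma coeff2_diff_rational: "of_differences coeff2 \<in> diff_rational"
proof -
  have "(\<lambda>x. 1/6 * ((x$1 - x$2) * (inverse (x$2 - x$3) * inverse (x$3 - x$1))
      + 2 * inverse (x$1 - x$2))) \<in> diff_rational"
    by (rule diff_rational.mult[OF diff_rational.const diff_rational.add[OF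
          diff_rational.mult[OF diff_rational_diff[OF diff_rational.component diff_rational.component]
            diff_rational.mult[OF diff_rational.inverse_diff diff_rational.inverse_diff]]
          diff_rational.mult[OF diff_rational.const diff_rational.inverse_diff]]]) simp_all
  moreover have "of_differences coeff2 = (\<lambda>x. 1/6 * ((x$1 - x$2)
      * (inverse (x$2 - x$3) * inverse (x$3 - x$1)) + 2 * inverse (x$1 - x$2)))"
    by (simp add: fun_eq_iff of_differences_def coeff2_def inverse_eq_divide)
  ultimately show ?thesis
    by simp
qed

lemma coeff3_diff_rational: "of_differences coeff3 \<in> diff_rational"
proof -
  have "(\<lambda>x. 1/2 * (inverse (x$2 - x$3) - inverse (x$3 - x$1))) \<in> diff_rational"
    by (rule diff_rational.mult[OF diff_rational.const
          diff_rational_diff[OF diff_rational.inverse_diff diff_rational.inverse_diff]]) simp_all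
  moreover have "of_differences coeff3 = (\<lambda>x. 1/2 * (inverse (x$2 - x$3) - inverse (x$3 - x$1)))"
    by (simp add: fun_eq_iff of_differences_def coeff3_def inverse_eq_divide)
  ultimately show ?thesis
    by simp
qed

lemma smooth_on_pencil_entry: "smooth_on Omega (\<lambda>x. (a *\<^sub>R Pf1 x + b *\<^sub>R Pf2 x) $ i $ j)"
  unfolding pencil_entry
  by (rule smooth_on_diff_rational[OF diff_rational.add[OF diff_rational.add[OF
        diff_rational.mult[OF diff_rational.const coeff1_diff_rational]
        diff_rational.mult[OF diff_rational.const coeff2_diff_rational]]
        diff_rational.mult[OF diff_rational.const coeff3_diff_rational]]])

lemma has_real_derivative_coeff1:
  assumes "a \<noteq> 0" "b \<noteq> 0" "c \<noteq> 0"
  shows "((\<lambda>t. coeff1 (a + t * a') (b + t * b') (c + t * c')) has_real_derivative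
    (a' * b * c + a * b' * c + a * b * c') / (sqrt 6 * (a * b * c)^2)) (at 0)"
  unfolding coeff1_def using assms
  by (auto intro!: derivative_eq_intros simp: field_simps power2_eq_square)

lemma has_real_derivative_coeff2:
  assumes "a \<noteq> 0" "b \<noteq> 0" "c \<noteq> 0"
  shows "((\<lambda>t. coeff2 (a + t * a') (b + t * b') (c + t * c')) has_real_derivative
    1/6 * ((a' * b * c - a * (b' * c + b * c')) / (b * c)^2 - 2 * a' / a^2)) (at 0)"
  unfolding coeff2_def using assms
  by (auto intro!: derivative_eq_intros simp: field_simps power2_eq_square)

lemma has_real_derivative_coeff3:
  assumes "b \<noteq> 0" "c \<noteq> 0"
  shows "((\<lambda>t. coeff3 (a + t * a') (b + t * b') (c + t * c')) has_real_derivative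
    1/2 * (c' / c^2 - b' / b^2)) (at 0)"
  unfolding coeff3_def using assms
  by (auto intro!: derivative_eq_intros simp: field_simps power2_eq_square)

lemma partial_coeff1:
  assumes "x \<in> Omega"
  shows "partial k (of_differences coeff1) x =
    (let a = x$1 - x$2; b = x$2 - x$3; c = x$3 - x$1; e = axis k (1::real);
         a' = e$1 - e$2; b' = e$2 - e$3; c' = e$3 - e$1
     in (a' * b * c + a * b' * c + a * b * c') / (sqrt 6 * (a * b * c)^2))"
  unfolding partial_of_differences Let_def
  by (intro DERIV_imp_deriv has_real_derivative_coeff1) (use Omega_differences_nonzero[OF assms] in auto)

lemma partial_coeff2:
  assumes "x \<in> Omega"
  shows "partial k (of_differences coeff2) x =
    (let a = x$1 - x$2; b = x$2 - x$3; c = x$3 - x$1; e = axis k (1::real);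
         a' = e$1 - e$2; b' = e$2 - e$3; c' = e$3 - e$1
     in 1/6 * ((a' * b * c - a * (b' * c + b * c')) / (b * c)^2 - 2 * a' / a^2))"
  unfolding partial_of_differences Let_def
  by (intro DERIV_imp_deriv has_real_derivative_coeff2) (use Omega_differences_nonzero[OF assms] in auto)

lemma partial_coeff3:
  assumes "x \<in> Omega"
  shows "partial k (of_differences coeff3) x =
    (let b = x$2 - x$3; c = x$3 - x$1; e = axis k (1::real); b' = e$2 - e$3; c' = e$3 - e$1
     in 1/2 * (c' / c^2 - b' / b^2))"
  unfolding partial_of_differences Let_def
  by (intro DERIV_imp_deriv has_real_derivative_coeff3) (use Omega_differences_nonzero[OF assms] in auto)

lemma jacobi_coeff_pencil:
  assumes x: "x \<in> Omega"
  shows "jacobi_coeff_at (\<lambda>x. a *\<^sub>R Pf1 x + b *\<^sub>R Pf2 x) x = 0"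
proof -
  let ?p1 = "of_differences coeff1" and ?p2 = "of_differences coeff2"
    and ?p3 = "of_differences coeff3"
  have partial_entry: "partial k (\<lambda>y. (a *\<^sub>R Pf1 y + b *\<^sub>R Pf2 y) $ i $ j) x
      = a * M1 $ i $ j * partial k ?p1 x + b * M2 $ i $ j * partial k ?p2 x
        + b * M3 $ i $ j * partial k ?p3 x" for i j k
    unfolding pencil_entry
    by (rule partial_linear_combination) (use diff_rational_differentiable[OF _ x]
        coeff1_diff_rational coeff2_diff_rational coeff3_diff_rational in blast)+
  obtain A B C where ABC: "x$1 - x$2 = A" "x$2 - x$3 = B" "x$3 - x$1 = C"
    and C_eq: "C = - A - B" and nonzero: "A \<noteq> 0" "B \<noteq> 0" "C \<noteq> 0"
    using Omega_differencesE[OF x] .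
  have sqrt6: "sqrt 6 \<noteq> 0"
    by simp
  have translation_invariance:
      "partial 3 ?p1 x = - partial 1 ?p1 x - partial 2 ?p1 x"
      "partial 3 ?p2 x = - partial 1 ?p2 x - partial 2 ?p2 x"
      "partial 3 ?p3 x = - partial 1 ?p3 x - partial 2 ?p3 x"
    unfolding partial_coeff1[OF x] partial_coeff2[OF x] partial_coeff3[OF x] Let_def
      axis_components ABC
    using nonzero sqrt6 by (simp_all add: divide_simps) (simp_all add: algebra_simps)
  have "jacobi_coeff_at (\<lambda>x. a *\<^sub>R Pf1 x + b *\<^sub>R Pf2 x) x = -3 * a * b *
      (?p1 x * (partial 1 ?p2 x - partial 2 ?p2 x + partial 1 ?p3 x + partial 2 ?p3 x)
       - ?p2 x * (partial 1 ?p1 x - partial 2 ?p1 x) - ?p3 x * (partial 1 ?p1 x + partial 2 ?p1 x))"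
    unfolding jacobi_coeff_at_def jacobi_coeff_def partial_entry
    unfolding pencil_entry M1_def M2_def M3_def
    by (simp add: translation_invariance algebra_simps)
  also have "\<dots> = 0"
    unfolding partial_coeff1[OF x] partial_coeff2[OF x] partial_coeff3[OF x] Let_def
      axis_components of_differences_def coeff1_def coeff2_def coeff3_def ABC
    using nonzero sqrt6 by (simp add: divide_simps) (unfold C_eq, algebra)
  finally show ?thesis .
qed

section \<open>The bi-Hamiltonian form of the vector field\<close>

definition hamiltonian :: "real \<Rightarrow> real \<Rightarrow> real \<Rightarrow> real" where
  "hamiltonian a b c = 1 / (6 * sqrt 6) * ((b - c) * ((b - c)^2 - 9 * a^2))"

lemma Hf_eq: "Hf = of_differences hamiltonian"
proof
  fix x :: pt
  have "x$2 - x$3 - (x$3 - x$1) = x$1 + x$2 - 2 * x$3"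
    by simp
  then show "Hf x = of_differences hamiltonian x"
    unfolding Hf_def of_differences_def hamiltonian_def Let_def by (simp only: mult.assoc)
qed

lemma has_real_derivative_hamiltonian:
  "((\<lambda>t. hamiltonian (a + t * a') (b + t * b') (c + t * c')) has_real_derivative
    1 / (6 * sqrt 6) * ((b' - c') * ((b - c)^2 - 9 * a^2) + (b - c) * (2 * (b - c) * (b' - c') - 18 * a * a')))
    (at 0)"
  unfolding hamiltonian_def
  by (intro DERIV_cmult) (auto intro!: derivative_eq_intros simp: algebra_simps power2_eq_square)

lemma partial_Hf:
  "partial k Hf x =
    (let a = x$1 - x$2; b = x$2 - x$3; c = x$3 - x$1; e = axis k (1::real);
         a' = e$1 - e$2; b' = e$2 - e$3; c' = e$3 - e$1
     in 1 / (6 * sqrt 6) * ((b' - c') * ((b - c)^2 - 9 * a^2) + (b - c) * (2 * (b - c) * (b' - c') - 18 * a * a')))"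
  unfolding Hf_eq partial_of_differences Let_def
  by (intro DERIV_imp_deriv has_real_derivative_hamiltonian)

lemma partial_H1: "partial k H1 x = 1"
proof -
  have "((\<lambda>t. H1 (x + t *\<^sub>R axis k 1)) has_real_derivative
      (axis k 1 $ 1 + axis k 1 $ 2 + axis k (1::real) $ 3)) (at 0)"
    unfolding H1_def by (auto intro!: derivative_eq_intros)
  moreover have "axis k 1 $ 1 + axis k 1 $ 2 + axis k (1::real) $ 3 = 1"
    using exhaust_3[of k] axis_components by auto
  ultimately show ?thesis
    unfolding partial_def using DERIV_imp_deriv by simp
qed

lemma Ufield_eq:
  "Ufield x = vector [1 / (x$1 - x$2) - 1 / (x$3 - x$1), 1 / (x$2 - x$3) - 1 / (x$1 - x$2),
     1 / (x$3 - x$1) - 1 / (x$2 - x$3)]"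
proof -
  have "1 / (p - q) = - (1 / (q - p))" for p q :: real
    by (metis divide_minus_right minus_diff_eq)
  then show ?thesis
    unfolding Ufield_def Let_def by (metis diff_minus_eq_add)
qed

lemma Ufield_eq_Pf1_grad_Hf:
  assumes x: "x \<in> Omega"
  shows "Ufield x = Pf1 x *v grad Hf x"
proof -
  obtain A B C where ABC: "x$1 - x$2 = A" "x$2 - x$3 = B" "x$3 - x$1 = C"
    and C_eq: "C = - A - B" and nonzero: "A \<noteq> 0" "B \<noteq> 0" "C \<noteq> 0"
    using Omega_differencesE[OF x] .
  have sqrt6: "sqrt 6 * sqrt 6 = (6::real)"
    by simp
  show ?thesis
    unfolding vec_eq_iff forall_3 Ufield_eq
    using nonzero
    by (simp add: Pf1_eq grad_def partial_Hf Let_def ABC matrix_vector_mult_def sum_3 M1_def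
        axis_components of_differences_def coeff1_def divide_simps)
      (unfold C_eq, insert sqrt6, algebra)
qed

lemma Ufield_eq_Pf2_grad_H1:
  assumes x: "x \<in> Omega"
  shows "Ufield x = Pf2 x *v grad H1 x"
proof -
  obtain A B C where ABC: "x$1 - x$2 = A" "x$2 - x$3 = B" "x$3 - x$1 = C"
    and C_eq: "C = - A - B" and nonzero: "A \<noteq> 0" "B \<noteq> 0" "C \<noteq> 0"
    using Omega_differencesE[OF x] .
  show ?thesis
    unfolding vec_eq_iff forall_3 Ufield_eq
    using nonzero
    by (simp add: Pf2_eq grad_def partial_H1 ABC matrix_vector_mult_def sum_3 M2_def M3_def
        of_differences_def coeff2_def coeff3_def divide_simps)
      (unfold C_eq, algebra)
qed

theorem mainTheorem5:
  shows "poisson_matrix_on Omega Pf1 \<and> poisson_matrix_on Omega Pf2 \<and> compatible_on Omega Pf1 Pf2 \<and>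
         (\<forall>x\<in>Omega. Ufield x = Pf1 x *v grad Hf x \<and> Ufield x = Pf2 x *v grad H1 x)"
proof -
  have pencil: "poisson_matrix_on Omega (\<lambda>x. a *\<^sub>R Pf1 x + b *\<^sub>R Pf2 x)" for a b
    using open_Omega smooth_on_pencil_entry transpose_pencil jacobi_coeff_pencil
    by (rule poisson_matrix_onI)
  have "poisson_matrix_on Omega Pf1"
    using pencil[of 1 0] by simp
  moreover have "poisson_matrix_on Omega Pf2"
    using pencil[of 0 1] by simp
  moreover have "compatible_on Omega Pf1 Pf2"
    unfolding compatible_on_def using pencil by blast
  ultimately show ?thesis
    using Ufield_eq_Pf1_grad_Hf Ufield_eq_Pf2_grad_H1 by blast
qed

end
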